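(* Let $k\ge 2$ be an integer and $n\in\mathbb{Z}$. Then $L_k^{(n)}=Q_k^{n}L_k^{(0)}=L_k^{(0)}Q_k^{n}$.
   Context: Fix an integer $k\ge2$. The generalized Fibonacci sequence of order $k$, $(f_{k,n})_{n\in\mathbb Z}$, is the two-sided integer sequence with $f_{k,0}=f_{k,1}=\dots=f_{k,k-2}=0$, $f_{k,k-1}=1$, and $f_{k,n+k}=f_{k,n+k-1}+f_{k,n+k-2}+\dots+f_{k,n}$ for all $n\in\mathbb Z$. For $n\in\mathbb Z$, the generalized Fibonacci matrix $Q_k^n$ is the $k\times k$ matrix with entries $(Q_k^n)_{i,1}=f_{k,k+n-i}$ and $(Q_k^n)_{i,j}=\sum_{m=n-i+j-1}^{k+n-i-1} f_{k,m}$ for $2\le j\le k$, $1\le i\le k$. In particular $Q_k=Q_k^1$ is the matrix whose first row is all ones, with $(Q_k)_{i+1,i}=1$ for $1\le i\le k-1$ and all other entries $0$; it is known that $Q_k^n$ equals the $n$-th power of $Q_k$ for every $n\in\mathbb Z$ (with $Q_k^0=I_k$), and $\det Q_k^n=(-1)^{(k-1)n}$. The generalized Lucas sequence of order $k$, $(l_{k,n})_{n\in\mathbb Z}$, is the two-sided sequence satisfying $l_{k,n+k}=l_{k,n+k-1}+\dots+l_{k,n}$ for all $n\in\mathbb Z$ with initial values $l_{k,r}=\operatorname{trace}(Q_k^r)$ for $0\le r\le k-1$ (so $l_{k,0}=k$ and $l_{k,r}=2^r-1$ for $1\le r\le k-1$). For $n\in\mathbb Z$ the generalized Lucas matrix $L_k^{(n)}$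 is the $k\times k$ matrix with entries $(L_k^{(n)})_{i,1}=l_{k,k+n-i}$ and $(L_k^{(n)})_{i,j}=\sum_{m=n-i+j-1}^{k+n-i-1} l_{k,m}$ for $2\le j\le k$, $1\le i\le k$. *)

theory Defs
  imports "Jordan_Normal_Form.Matrix"
begin

definition lin_rec_seq :: "nat \<Rightarrow> (int \<Rightarrow> int) \<Rightarrow> int \<Rightarrow> int" where
  "lin_rec_seq k a = (THE g. (\<forall>n. g (n + int k) = (\<Sum>j<k. g (n + int j))) \<and>
                            (\<forall>r. 0 \<le> r \<and> r < int k \<longrightarrow> g r = a r))"

definition gfib :: "nat \<Rightarrow> int \<Rightarrow> int" where
  "gfib k = lin_rec_seq k (\<lambda>r. if r = int k - 1 then 1 else 0)"

text \<open>The k x k matrix built from a sequence s as in the paper (1-based indices i,j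
  of the paper correspond to 0-based indices i+1, j+1 here):
  entry (i,1) = s(k+n-i), entry (i,j) = sum_{m=n-i+j-1}^{k+n-i-1} s(m) for j >= 2.\<close>
definition seq_matrix :: "nat \<Rightarrow> (int \<Rightarrow> int) \<Rightarrow> int \<Rightarrow> int mat" where
  "seq_matrix k s n = mat k k (\<lambda>(i, j).
     (let i' = int i + 1; j' = int j + 1 in
      if j = 0 then s (int k + n - i')
      else (\<Sum>m\<in>{n - i' + j' - 1 .. int k + n - i' - 1}. s m)))"

definition Qmat :: "nat \<Rightarrow> int \<Rightarrow> int mat" where
  "Qmat k n = seq_matrix k (gfib k) n"

definition mtrace :: "int mat \<Rightarrow> int" where
  "mtrace A = (\<Sum>i<dim_row A. A $$ (i, i))"

definition glucas :: "nat \<Rightarrow> int \<Rightarrow> int" where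
  "glucas k = lin_rec_seq k (\<lambda>r. mtrace (Qmat k r))"

definition Lmat :: "nat \<Rightarrow> int \<Rightarrow> int mat" where
  "Lmat k n = seq_matrix k (glucas k) n"

end

(* The sequences f_k and l_k are given by a definite description; a two-sided solution of the
   order-k recurrence exists (run the recurrence forwards and, solved for its first term,
   backwards) and is unique, so both are genuine solutions.

   Q_k^n and L_k^(n) are both M(s, n) for the same matrix construction M applied to a solution
   s of the recurrence, and for every such s multiplying M(s, n) by the companion matrix Q_k on
   either side gives M(s, n + 1). So n |-> L_k^(n) and n |-> Q_k^n L_k^(0) obey the same recursion
   X(n + 1) = Q_k X(n), and agree at n = 0 because Q_k^0 = I; as multiplication by Q_k is
   injective, they agree on all of Z. The same argument with right multiplication gives
   L_k^(n) = L_k^(0) Q_k^n. *)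

theory Submission
  imports Defs
begin

definition fib_recurrence :: "nat \<Rightarrow> (int \<Rightarrow> 'a::comm_monoid_add) \<Rightarrow> bool" where
  "fib_recurrence k s \<longleftrightarrow> (\<forall>n. s (n + int k) = (\<Sum>j<k. s (n + int j)))"

lemma fib_recurrenceD: "fib_recurrence k s \<Longrightarrow> s (n + int k) = (\<Sum>j<k. s (n + int j))"
  by (simp add: fib_recurrence_def)

lemma fib_recurrence_solve_first:
  fixes s :: "int \<Rightarrow> 'a::ab_group_add"
  assumes "fib_recurrence k s" "k \<ge> 1"
  shows "s n = s (n + int k) - (\<Sum>j\<in>{1..<k}. s (n + int j))"
  using fib_recurrenceD[OF assms(1), of n] assms(2)
  by (simp add: lessThan_atLeast0 sum.atLeast_Suc_lessThan)

function fib_extension :: "nat \<Rightarrow> (int \<Rightarrow> 'a::ab_group_add) \<Rightarrow> int \<Rightarrow> 'a" where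
  "fib_extension k a n =
    (if k = 0 then 0 else if 0 \<le> n \<and> n < int k then a n
     else if n \<ge> int k then (\<Sum>j<k. fib_extension k a (n - int k + int j))
     else fib_extension k a (n + int k) - (\<Sum>j\<in>{1..<k}. fib_extension k a (n + int j)))"
  by pat_completeness auto
termination
  by (relation "measures [\<lambda>(k, a, n). nat (- n), \<lambda>(k, a, n). nat n]") auto

declare fib_extension.simps [simp del]

lemma fib_extension_init: "0 \<le> r \<Longrightarrow> r < int k \<Longrightarrow> fib_extension k a r = a r"
  by (subst fib_extension.simps) simp

lemma fib_recurrence_fib_extension:
  assumes "k \<ge> 1"
  shows "fib_recurrence k (fib_extension k a)"
  unfolding fib_recurrence_def
proof
  fix n
  show "fib_extension k a (n + int k) = (\<Sum>j<k. fib_extension k a (n + int j))"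
  proof (cases "n \<ge> 0")
    case True
    then show ?thesis using assms by (subst fib_extension.simps) simp
  next
    case False
    have "fib_extension k a n
        = fib_extension k a (n + int k) - (\<Sum>j\<in>{1..<k}. fib_extension k a (n + int j))"
      using False assms by (subst fib_extension.simps) simp
    then show ?thesis using assms by (simp add: lessThan_atLeast0 sum.atLeast_Suc_lessThan)
  qed
qed

lemma fib_recurrence_unique:
  fixes g h :: "int \<Rightarrow> 'a::ab_group_add"
  assumes k: "k \<ge> 1" and g: "fib_recurrence k g" and h: "fib_recurrence k h"
    and init: "\<And>r. 0 \<le> r \<Longrightarrow> r < int k \<Longrightarrow> g r = h r"
  shows "g = h"
proof -
  \<comment> \<open>Agreement on [0, k) spreads one step outwards in both directions at a time.\<close>
  have window: "\<forall>r. - int m \<le> r \<and> r < int k + int m \<longrightarrow> g r = h r" for m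
  proof (induction m)
    case 0
    then show ?case using init by simp
  next
    case (Suc m)
    show ?case
    proof (intro allI impI)
      fix r assume r: "- int (Suc m) \<le> r \<and> r < int k + int (Suc m)"
      consider "r = int k + int m" | "r = - int (Suc m)" | "- int m \<le> r \<and> r < int k + int m"
        using r by linarith
      then show "g r = h r"
      proof cases
        case 1
        have "g r = (\<Sum>j<k. g (int m + int j))" using fib_recurrenceD[OF g, of "int m"] 1 by (simp add: add.commute)
        also have "\<dots> = (\<Sum>j<k. h (int m + int j))" using Suc.IH by (intro sum.cong) auto
        also have "\<dots> = h r" using fib_recurrenceD[OF h, of "int m"] 1 by (simp add: add.commute)
        finally show ?thesis .
      next
        case 2
        have "g r = g (r + int k) - (\<Sum>j\<in>{1..<k}. g (r + int j))" by (rule fib_recurrence_solve_first[OF g k])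
        also have "\<dots> = h (r + int k) - (\<Sum>j\<in>{1..<k}. h (r + int j))"
          using Suc.IH 2 k by (intro arg_cong2[where f = "(-)"] sum.cong) auto
        also have "\<dots> = h r" by (rule fib_recurrence_solve_first[OF h k, symmetric])
        finally show ?thesis .
      qed (use Suc.IH in auto)
    qed
  qed
  show ?thesis
  proof
    fix r
    have "- \<bar>r\<bar> \<le> r \<and> r < int k + \<bar>r\<bar>" using k by linarith
    then show "g r = h r" using window[of "nat \<bar>r\<bar>"] by simp
  qed
qed

lemma lin_rec_seq_spec:
  assumes "k \<ge> 1"
  shows "fib_recurrence k (lin_rec_seq k a) \<and> (\<forall>r. 0 \<le> r \<and> r < int k \<longrightarrow> lin_rec_seq k a r = a r)"
  unfolding lin_rec_seq_def fib_recurrence_def [symmetric]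
proof (rule theI [of _ "fib_extension k a"])
  show "fib_recurrence k (fib_extension k a) \<and> (\<forall>r. 0 \<le> r \<and> r < int k \<longrightarrow> fib_extension k a r = a r)"
    using fib_recurrence_fib_extension[OF assms] fib_extension_init by blast
next
  fix g assume "fib_recurrence k g \<and> (\<forall>r. 0 \<le> r \<and> r < int k \<longrightarrow> g r = a r)"
  then show "g = fib_extension k a"
    by (intro fib_recurrence_unique[OF assms])
      (auto simp: fib_recurrence_fib_extension[OF assms] fib_extension_init)
qed

lemma lin_rec_seq_recurrence: "k \<ge> 1 \<Longrightarrow> fib_recurrence k (lin_rec_seq k a)"
  by (rule conjunct1[OF lin_rec_seq_spec])

lemma lin_rec_seq_init: "k \<ge> 1 \<Longrightarrow> 0 \<le> r \<Longrightarrow> r < int k \<Longrightarrow> lin_rec_seq k a r = a r"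
  using lin_rec_seq_spec[of k a] by simp

definition companion_mat :: "nat \<Rightarrow> 'a::zero_neq_one mat" where
  "companion_mat k = mat k k (\<lambda>(i, j). if i = 0 \<or> i = j + 1 then 1 else 0)"

lemma companion_mat_carrier [simp]: "companion_mat k \<in> carrier_mat k k"
  by (simp add: companion_mat_def)

lemma seq_matrix_carrier [simp]: "seq_matrix k s n \<in> carrier_mat k k"
  by (simp add: seq_matrix_def)

lemma index_mult_mat_sum:
  assumes "A \<in> carrier_mat k k" "B \<in> carrier_mat k k" "i < k" "j < k"
  shows "(A * B) $$ (i, j) = (\<Sum>l<k. A $$ (i, l) * B $$ (l, j))"
  using assms by (simp add: scalar_prod_def row_def col_def lessThan_atLeast0)

lemma index_companion_mult:
  fixes X :: "'a::semiring_1 mat"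
  assumes "X \<in> carrier_mat k k" "i < k" "j < k"
  shows "(companion_mat k * X) $$ (i, j) = (if i = 0 then (\<Sum>l<k. X $$ (l, j)) else X $$ (i - 1, j))"
proof -
  have "(companion_mat k * X) $$ (i, j) = (\<Sum>l<k. companion_mat k $$ (i, l) * X $$ (l, j))"
    using assms by (simp add: index_mult_mat_sum)
  also have "\<dots> = (\<Sum>l<k. if i = 0 \<or> l = i - 1 then X $$ (l, j) else 0)"
    using assms by (intro sum.cong) (auto simp: companion_mat_def)
  finally show ?thesis using assms by (auto simp: sum.delta)
qed

lemma index_mult_companion:
  fixes X :: "'a::semiring_1 mat"
  assumes "X \<in> carrier_mat k k" "i < k" "j < k"
  shows "(X * companion_mat k) $$ (i, j) = X $$ (i, 0) + (if j + 1 < k then X $$ (i, j + 1) else 0)"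
proof -
  have "(X * companion_mat k) $$ (i, j) = (\<Sum>l<k. X $$ (i, l) * companion_mat k $$ (l, j))"
    using assms by (simp add: index_mult_mat_sum)
  also have "\<dots> = (\<Sum>l<k. (if l = 0 then X $$ (i, l) else 0) + (if l = j + 1 then X $$ (i, l) else 0))"
    using assms by (intro sum.cong) (auto simp: companion_mat_def)
  finally show ?thesis using assms by (simp add: sum.distrib sum.delta)
qed

lemma inj_on_companion_mult:
  "inj_on (\<lambda>X. companion_mat k * X) (carrier_mat k k :: 'a::comm_ring_1 mat set)"
proof (rule inj_onI)
  fix X Y :: "'a mat"
  assume X: "X \<in> carrier_mat k k" and Y: "Y \<in> carrier_mat k k"
    and eq: "companion_mat k * X = companion_mat k * Y"
  have upper: "X $$ (i, j) = Y $$ (i, j)" if "i + 1 < k" "j < k" for i j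
    using arg_cong[OF eq, of "\<lambda>M. M $$ (i + 1, j)"] that
    by (simp add: index_companion_mult[OF X] index_companion_mult[OF Y])
  show "X = Y"
  proof (rule eq_matI)
    fix i j assume "i < dim_row Y" "j < dim_col Y"
    then have i: "i < k" and j: "j < k" using Y by auto
    show "X $$ (i, j) = Y $$ (i, j)"
    proof (cases "i + 1 < k")
      case True
      then show ?thesis using upper j by simp
    next
      case False
      then have k: "k = Suc i" using i by simp
      have "(\<Sum>l<k. X $$ (l, j)) = (\<Sum>l<k. Y $$ (l, j))"
        using arg_cong[OF eq, of "\<lambda>M. M $$ (0, j)"] i j
        by (simp add: index_companion_mult[OF X] index_companion_mult[OF Y])
      moreover have "(\<Sum>l<i. X $$ (l, j)) = (\<Sum>l<i. Y $$ (l, j))"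
        using upper j k by (intro sum.cong) auto
      ultimately show ?thesis using k by simp
    qed
  qed (use X Y in auto)
qed

lemma inj_on_mult_companion:
  "inj_on (\<lambda>X. X * companion_mat k) (carrier_mat k k :: 'a::comm_ring_1 mat set)"
proof (rule inj_onI)
  fix X Y :: "'a mat"
  assume X: "X \<in> carrier_mat k k" and Y: "Y \<in> carrier_mat k k"
    and eq: "X * companion_mat k = Y * companion_mat k"
  have col: "(X * companion_mat k) $$ (i, j) = (Y * companion_mat k) $$ (i, j)" for i j
    using eq by simp
  have first: "X $$ (i, 0) = Y $$ (i, 0)" if "i < k" for i
    using col[of i "k - 1"] that by (simp add: index_mult_companion[OF X] index_mult_companion[OF Y])
  show "X = Y"
  proof (rule eq_matI)
    fix i j assume "i < dim_row Y" "j < dim_col Y"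
    then have i: "i < k" and j: "j < k" using Y by auto
    show "X $$ (i, j) = Y $$ (i, j)"
    proof (cases j)
      case 0
      then show ?thesis using first i by simp
    next
      case (Suc j')
      then show ?thesis using col[of i j'] first[OF i] i j
        by (simp add: index_mult_companion[OF X] index_mult_companion[OF Y])
    qed
  qed (use X Y in auto)
qed

lemma index_seq_matrix:
  assumes "i < k" "j < k"
  shows "seq_matrix k s n $$ (i, j) =
    (if j = 0 then s (n - int i - 1 + int k) else (\<Sum>d\<in>{j..<k}. s (n - int i - 1 + int d)))"
proof (cases "j = 0")
  case True
  then show ?thesis using assms by (simp add: seq_matrix_def algebra_simps)
next
  case False
  define c where "c = n - int i - 1"
  have "seq_matrix k s n $$ (i, j)
      = sum s {n - (int i + 1) + (int j + 1) - 1 .. int k + n - (int i + 1) - 1}"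
    using assms False unfolding seq_matrix_def Let_def by simp
  also have "{n - (int i + 1) + (int j + 1) - 1 .. int k + n - (int i + 1) - 1} = {int j + c ..< int k + c}"
    by (auto simp: c_def)
  also have "\<dots> = plus c ` int ` {j..<k}"
    by (simp add: image_int_atLeastLessThan)
  also have "sum s \<dots> = (\<Sum>d\<in>{j..<k}. s (c + int d))"
    by (simp add: sum.reindex inj_on_def)
  finally show ?thesis using False by (simp add: c_def)
qed

lemma fib_recurrence_window:
  assumes "fib_recurrence k s"
  shows "s (c + int j + int k) = (\<Sum>d\<in>{j..<j + k}. s (c + int d))"
proof -
  have "s (c + int j + int k) = (\<Sum>e<k. s (c + int j + int e))"
    by (rule fib_recurrenceD[OF assms])
  also have "\<dots> = (\<Sum>e\<in>{0..<k}. (\<lambda>d. s (c + int d)) (e + j))"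
    by (simp add: lessThan_atLeast0 algebra_simps)
  also have "\<dots> = (\<Sum>d\<in>{0 + j..<k + j}. s (c + int d))"
    by (rule sum.shift_bounds_nat_ivl [symmetric])
  finally show ?thesis by (simp add: add.commute)
qed

lemma fib_recurrence_preceding:
  assumes "fib_recurrence k s"
  shows "s x = (\<Sum>l<k. s (x - 1 - int l))"
proof -
  have "s x = (\<Sum>j<k. s (x - int k + int j))" using fib_recurrenceD[OF assms, of "x - int k"] by simp
  also have "\<dots> = (\<Sum>l<k. s (x - int k + int (k - Suc l)))"
    by (rule sum.nat_diff_reindex[symmetric])
  also have "\<dots> = (\<Sum>l<k. s (x - 1 - int l))"
    by (intro sum.cong) (auto simp: of_nat_diff algebra_simps)
  finally show ?thesis .
qed

lemma index_seq_matrix_recurrence: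
  assumes "fib_recurrence k s" "i < k" "j < k"
  shows "seq_matrix k s n $$ (i, j) = (\<Sum>d\<in>{j..<k}. s (n - int i - 1 + int d))"
  using index_seq_matrix[OF assms(2,3)] fib_recurrenceD[OF assms(1), of "n - int i - 1"]
  by (simp add: lessThan_atLeast0)

lemma companion_mult_seq_matrix:
  assumes s: "fib_recurrence k s"
  shows "companion_mat k * seq_matrix k s n = seq_matrix k s (n + 1)"
proof (rule eq_matI)
  fix i j assume "i < dim_row (seq_matrix k s (n + 1))" "j < dim_col (seq_matrix k s (n + 1))"
  then have i: "i < k" and j: "j < k" by (auto simp: seq_matrix_def)
  show "(companion_mat k * seq_matrix k s n) $$ (i, j) = seq_matrix k s (n + 1) $$ (i, j)"
  proof (cases i)
    case 0
    have "(companion_mat k * seq_matrix k s n) $$ (i, j)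
        = (\<Sum>l<k. \<Sum>d\<in>{j..<k}. s (n - int l - 1 + int d))"
      using i j 0 by (simp add: index_companion_mult index_seq_matrix_recurrence[OF s])
    also have "\<dots> = (\<Sum>d\<in>{j..<k}. \<Sum>l<k. s (n + int d - 1 - int l))"
      by (subst sum.swap) (simp add: algebra_simps)
    also have "\<dots> = (\<Sum>d\<in>{j..<k}. s (n + int d))"
      by (intro sum.cong refl) (rule fib_recurrence_preceding[OF s, symmetric])
    also have "\<dots> = seq_matrix k s (n + 1) $$ (i, j)"
      using i j 0 by (simp add: index_seq_matrix_recurrence[OF s])
    finally show ?thesis .
  next
    case (Suc i')
    then show ?thesis
      using i j by (simp add: index_companion_mult index_seq_matrix_recurrence[OF s] algebra_simps)
  qed
qed (simp_all add: seq_matrix_def companion_mat_def)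

lemma seq_matrix_mult_companion:
  assumes s: "fib_recurrence k s"
  shows "seq_matrix k s n * companion_mat k = seq_matrix k s (n + 1)"
proof (rule eq_matI)
  fix i j assume "i < dim_row (seq_matrix k s (n + 1))" "j < dim_col (seq_matrix k s (n + 1))"
  then have i: "i < k" and j: "j < k" by (auto simp: seq_matrix_def)
  define c where "c = n - int i - 1"
  have "(seq_matrix k s n * companion_mat k) $$ (i, j)
      = s (c + int k) + (\<Sum>d\<in>{Suc j..<k}. s (c + int d))"
    using i j by (cases "Suc j < k") (auto simp: index_mult_companion index_seq_matrix c_def algebra_simps)
  also have "\<dots> = (\<Sum>d\<in>{Suc j..<Suc k}. s (c + int d))"
    using j by (simp add: sum.atLeastLessThan_Suc add.commute)
  also have "\<dots> = (\<Sum>d\<in>{j..<k}. s (c + int (Suc d)))"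
    by (rule sum.shift_bounds_Suc_ivl)
  also have "\<dots> = (\<Sum>d\<in>{j..<k}. s (n + 1 - int i - 1 + int d))"
    by (simp add: c_def algebra_simps)
  also have "\<dots> = seq_matrix k s (n + 1) $$ (i, j)"
    using i j by (simp add: index_seq_matrix_recurrence[OF s])
  finally show "(seq_matrix k s n * companion_mat k) $$ (i, j) = seq_matrix k s (n + 1) $$ (i, j)" .
qed (simp_all add: seq_matrix_def companion_mat_def)

lemma gfib_recurrence: "k \<ge> 1 \<Longrightarrow> fib_recurrence k (gfib k)"
  unfolding gfib_def by (rule lin_rec_seq_recurrence)

lemma gfib_init: "k \<ge> 1 \<Longrightarrow> 0 \<le> r \<Longrightarrow> r < int k \<Longrightarrow> gfib k r = (if r = int k - 1 then 1 else 0)"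
  by (simp add: gfib_def lin_rec_seq_init)

lemma glucas_recurrence: "k \<ge> 1 \<Longrightarrow> fib_recurrence k (glucas k)"
  unfolding glucas_def by (rule lin_rec_seq_recurrence)

lemma Qmat_0:
  assumes k: "k \<ge> 1"
  shows "Qmat k 0 = 1\<^sub>m k"
proof (rule eq_matI)
  fix i j assume "i < dim_row (1\<^sub>m k)" "j < dim_col (1\<^sub>m k)"
  then have i: "i < k" and j: "j < k" by auto
  have entry: "Qmat k 0 $$ (i, j) = (\<Sum>d\<in>{j..<k}. gfib k (- int i - 1 + int d))"
    using i j by (simp add: Qmat_def index_seq_matrix_recurrence[OF gfib_recurrence[OF k]])
  show "Qmat k 0 $$ (i, j) = 1\<^sub>m k $$ (i, j)"
  proof (cases "i < j")
    case True
    then have "(\<Sum>d\<in>{j..<k}. gfib k (- int i - 1 + int d)) = 0"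
      by (intro sum.neutral) (auto simp: gfib_init[OF k])
    then show ?thesis using entry i j True by simp
  next
    case False
    \<comment> \<open>Complete the sum to a window of length k; the added terms lie among the initial zeros.\<close>
    have "gfib k (- int i - 1 + int j + int k)
        = (\<Sum>d\<in>{j..<k}. gfib k (- int i - 1 + int d)) + (\<Sum>d\<in>{k..<j + k}. gfib k (- int i - 1 + int d))"
      using j by (simp add: fib_recurrence_window[OF gfib_recurrence[OF k]] sum.atLeastLessThan_concat)
    moreover have "(\<Sum>d\<in>{k..<j + k}. gfib k (- int i - 1 + int d)) = 0"
      using False i by (intro sum.neutral) (auto simp: gfib_init[OF k])
    moreover have "gfib k (- int i - 1 + int j + int k) = (if i = j then 1 else 0)"
      using False i by (subst gfib_init[OF k]) auto
    ultimately show ?thesis using entry i j by simp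
  qed
qed (simp_all add: Qmat_def seq_matrix_def)

lemma int_recursion_unique:
  fixes X Y :: "int \<Rightarrow> 'a"
  assumes f: "inj_on f A" and X: "\<And>m. X m \<in> A" and Y: "\<And>m. Y m \<in> A"
    and X_step: "\<And>m. X (m + 1) = f (X m)" and Y_step: "\<And>m. Y (m + 1) = f (Y m)"
    and "X 0 = Y 0"
  shows "X n = Y n"
proof (induction n rule: int_induct [where k = 0])
  case base
  then show ?case by fact
next
  case (step1 m)
  then show ?case using X_step Y_step by simp
next
  case (step2 m)
  then have "f (X (m - 1)) = f (Y (m - 1))" using X_step[of "m - 1"] Y_step[of "m - 1"] by simp
  then show ?case using inj_onD[OF f _ X Y] by blast
qed

theorem theorem2:
  fixes k :: nat and n :: int
  assumes "k \<ge> 2"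
  shows "Lmat k n = Qmat k n * Lmat k 0 \<and> Lmat k n = Lmat k 0 * Qmat k n"
proof -
  have k: "k \<ge> 1" using assms by simp
  let ?C = "companion_mat k :: int mat" and ?L0 = "Lmat k 0"
  have Q: "Qmat k m \<in> carrier_mat k k" and L: "Lmat k m \<in> carrier_mat k k" for m
    by (simp_all add: Qmat_def Lmat_def)
  have step: "?C * Qmat k m = Qmat k (m + 1)" "Qmat k m * ?C = Qmat k (m + 1)"
    "?C * Lmat k m = Lmat k (m + 1)" "Lmat k m * ?C = Lmat k (m + 1)" for m
    by (simp_all add: Qmat_def Lmat_def companion_mult_seq_matrix seq_matrix_mult_companion
        gfib_recurrence[OF k] glucas_recurrence[OF k])
  have "Lmat k n = Qmat k n * ?L0"
  proof (rule int_recursion_unique[where Y = "\<lambda>m. Qmat k m * ?L0", OF inj_on_companion_mult L])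
    show "Qmat k m * ?L0 \<in> carrier_mat k k" for m by (rule mult_carrier_mat[OF Q L])
    show "Qmat k (m + 1) * ?L0 = ?C * (Qmat k m * ?L0)" for m
      using assoc_mult_mat[OF companion_mat_carrier Q L] by (simp add: step)
    show "Lmat k 0 = Qmat k 0 * ?L0" using L[of 0] by (simp add: Qmat_0[OF k])
  qed (simp add: step)
  moreover have "Lmat k n = ?L0 * Qmat k n"
  proof (rule int_recursion_unique[where Y = "\<lambda>m. ?L0 * Qmat k m", OF inj_on_mult_companion L])
    show "?L0 * Qmat k m \<in> carrier_mat k k" for m by (rule mult_carrier_mat[OF L Q])
    show "?L0 * Qmat k (m + 1) = ?L0 * Qmat k m * ?C" for m
      using assoc_mult_mat[OF L Q companion_mat_carrier] by (simp add: step)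
    show "Lmat k 0 = ?L0 * Qmat k 0" using L[of 0] by (simp add: Qmat_0[OF k])
  qed (simp add: step)
  ultimately show ?thesis by simp
qed

end
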